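(* Let $w\in\mathcal S_n$ and $a\in\mathrm R(w)$ with $a\notin[a_{\min}]$. Then there exists $b\in\mathrm R(w)$ such that $[b]$ and $[a]$ are adjacent in $C(w)$ (some word of $[b]$ and some word of $[a]$ differ by a single long braid relation) and $\mathrm{sup}(b)\subsetneq\mathrm{sup}(a)$. Similarly, if $a\notin[a_{\max}]$, there exists $b\in\mathrm R(w)$ with $[b]$ adjacent to $[a]$ in $C(w)$ and $\mathrm{sup}(a)\subsetneq\mathrm{sup}(b)$.
   Context: Permutations are in one-line notation; $\mathrm{Des}(u)=\{i:u_i>u_{i+1}\}$. A word $a=a_1\cdots a_\ell$ with letters in $\{1,\dots,n-1\}$ acts on a word of length $n$ by successively swapping the entries in positions $a_j$ and $a_j+1$. $\mathrm R(w)$: reduced words of $w$ (length $\ell(w)$ = number of inversions, action on $12\cdots n$ yields $w$). Commutation: replace a factor $ij$, $|i-j|\ge2$, by $ji$; long braid relation: replace $i(i+1)i$ by $(i+1)i(i+1)$ or vice versa; $[a]$ is the commutation class of $a$. $C(w)$: vertices are commutation classes, $[a]\ne[b]$ adjacent if some $a'\in[a]$, $b'\in[b]$ differ by one long braid relation. $a_{\min}$ (resp. $a_{\max}$): set $w^0=w$, for $j=0,\dots,\ell(w)-1$ let $i_j$ be the smallest (resp. largest) element of $\mathrm{Des}(w^j)$ and obtain $w^{j+1}$ by swapping the entries in positions $i_j,i_j+1$ of $w^j$; the word is $i_{\ell(w)-1}\cdots i_0$. For an inversion $(p,q)$ of $w$, $P_a(p,q)$ is the index of the step of $a$ swapping $p$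 and $q$. $\mathrm T_w$: triples $(x,y,z)$, $x<y<z$, with $z,y,x$ in this order in $w$. $\Gamma(a,(x,y,z))=1$ if $P_a(y,x)>P_a(z,y)$, else $0$. $\mathrm{sup}(a)=\{t\in\mathrm T_w:\Gamma(a,t)=1\}$. *)

theory Defs
  imports Main
begin

text \<open>Permutations of [n] in one-line notation are lists of length n
  containing each of 1..n exactly once. Positions are 1-indexed as in the paper.\<close>

definition is_perm :: "nat \<Rightarrow> nat list \<Rightarrow> bool" where
  "is_perm n w \<longleftrightarrow> length w = n \<and> distinct w \<and> set w = {1..n}"

definition id_perm :: "nat \<Rightarrow> nat list" where
  "id_perm n = [1..<n+1]"

text \<open>Swap the entries in (1-indexed) positions i and i+1.\<close>
definition swap_at :: "nat \<Rightarrow> nat list \<Rightarrow> nat list" where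
  "swap_at i u = u[i - 1 := u ! i, i := u ! (i - 1)]"

definition act :: "nat list \<Rightarrow> nat list \<Rightarrow> nat list" where
  "act a u = fold swap_at a u"

definition inv_count :: "nat list \<Rightarrow> nat" where
  "inv_count w = card {(i, j). i < j \<and> j < length w \<and> w ! i > w ! j}"

definition Des :: "nat list \<Rightarrow> nat set" where
  "Des u = {i. 1 \<le> i \<and> i < length u \<and> u ! (i - 1) > u ! i}"

definition reduced_words :: "nat list \<Rightarrow> nat list set" where
  "reduced_words w = {a. length a = inv_count w \<and> set a \<subseteq> {1..length w - 1}
                        \<and> act a (id_perm (length w)) = w}"

definition comm_step :: "nat list \<Rightarrow> nat list \<Rightarrow> bool" where
  "comm_step a b \<longleftrightarrow> (\<exists>xs i j ys. a = xs @ [i, j] @ ys \<and> b = xs @ [j, i] @ ys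
                          \<and> (i + 2 \<le> j \<or> j + 2 \<le> i))"

definition comm_class :: "nat list \<Rightarrow> nat list set" where
  "comm_class a = {b. (a, b) \<in> {(x, y). comm_step x y}\<^sup>*}"

definition braid_step :: "nat list \<Rightarrow> nat list \<Rightarrow> bool" where
  "braid_step a b \<longleftrightarrow> (\<exists>xs i ys.
      (a = xs @ [i, i + 1, i] @ ys \<and> b = xs @ [i + 1, i, i + 1] @ ys)
    \<or> (a = xs @ [i + 1, i, i + 1] @ ys \<and> b = xs @ [i, i + 1, i] @ ys))"

definition adjacent_classes :: "nat list \<Rightarrow> nat list \<Rightarrow> bool" where
  "adjacent_classes a b \<longleftrightarrow> comm_class a \<noteq> comm_class b \<and>
     (\<exists>a' \<in> comm_class a. \<exists>b' \<in> comm_class b. braid_step a' b')"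

fun min_steps :: "nat \<Rightarrow> nat list \<Rightarrow> nat list" where
  "min_steps 0 u = []"
| "min_steps (Suc k) u = (let i = Min (Des u) in i # min_steps k (swap_at i u))"

fun max_steps :: "nat \<Rightarrow> nat list \<Rightarrow> nat list" where
  "max_steps 0 u = []"
| "max_steps (Suc k) u = (let i = Max (Des u) in i # max_steps k (swap_at i u))"

definition a_min :: "nat list \<Rightarrow> nat list" where
  "a_min w = rev (min_steps (inv_count w) w)"

definition a_max :: "nat list \<Rightarrow> nat list" where
  "a_max w = rev (max_steps (inv_count w) w)"

text \<open>P_a(p,q): the (1-indexed) step of a (acting on 12...n) that swaps the values p and q.\<close>
definition P_step :: "nat \<Rightarrow> nat list \<Rightarrow> nat \<Rightarrow> nat \<Rightarrow> nat" where
  "P_step n a p q = (LEAST j. 1 \<le> j \<and> j \<le> length a \<and>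
      (let u = act (take (j - 1) a) (id_perm n); k = a ! (j - 1)
       in {u ! (k - 1), u ! k} = {p, q}))"

definition triples :: "nat list \<Rightarrow> (nat \<times> nat \<times> nat) set" where
  "triples w = {(x, y, z). x < y \<and> y < z \<and>
      (\<exists>i j k. i < j \<and> j < k \<and> k < length w \<and> w ! i = z \<and> w ! j = y \<and> w ! k = x)}"

definition Gamma :: "nat \<Rightarrow> nat list \<Rightarrow> nat \<times> nat \<times> nat \<Rightarrow> bool" where
  "Gamma n a t = (case t of (x, y, z) \<Rightarrow> P_step n a y x > P_step n a z y)"

definition sup_set :: "nat list \<Rightarrow> nat list \<Rightarrow> (nat \<times> nat \<times> nat) set" where
  "sup_set w a = {t \<in> triples w. Gamma (length w) a t}"

end

theory Submission
  imports Defs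
begin

text \<open>
  Commuting two far-apart letters of a reduced word permutes two disjoint transposed pairs of
  values, so it does not change \<open>sup\<close>; a braid move \<open>(i+1) i (i+1) \<mapsto> i (i+1) i\<close> reverses
  the order in which the three pairs \<open>{q,r}, {p,r}, {p,q}\<close> of its values \<open>p < q < r\<close> are
  transposed, so it removes exactly the triple \<open>(p, q, r)\<close> from \<open>sup\<close>.  It therefore suffices to
  find the factor \<open>(i+1) i (i+1)\<close> in some word of \<open>[a]\<close> when \<open>[a] \<noteq> [a\<^sub>m\<^sub>i\<^sub>n]\<close>.
  Let \<open>d\<close> be the minimal descent of \<open>w\<close>.  By induction on the length, some word of \<open>[a]\<close>
  ends with \<open>d\<close> or \<open>[a]\<close> contains such a factor: the last letter \<open>e\<close> of \<open>a\<close> is a descent of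
  \<open>w\<close>, so \<open>e = d\<close>, or \<open>e\<close> commutes with \<open>d\<close>, or \<open>e = d + 1\<close>, and in the last case moving \<open>d\<close>
  and then \<open>d + 1\<close> to the end yields \<open>(d+1) d (d+1)\<close>.  If a word of \<open>[a]\<close> ends with \<open>d\<close>, then,
  since \<open>a\<^sub>m\<^sub>i\<^sub>n\<close> also ends with \<open>d\<close>, we recurse on \<open>w s\<^sub>d\<close>.  The case of \<open>a\<^sub>m\<^sub>a\<^sub>x\<close> is
  symmetric, with the maximal descent and the factor \<open>i (i+1) i\<close>.
\<close>

subsection \<open>Adjacent transpositions\<close>

text \<open>A polymorphic copy of \<open>swap_at\<close>, so that it can also act on the sequence of
  transposed pairs of a word.\<close>

definition swap_adj :: "nat \<Rightarrow> 'a list \<Rightarrow> 'a list" where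
  "swap_adj k u = u[k - 1 := u ! k, k := u ! (k - 1)]"

lemma swap_at_eq_swap_adj [simp]: "swap_at = swap_adj"
  by (simp add: fun_eq_iff swap_at_def swap_adj_def)

lemma length_swap_adj [simp]: "length (swap_adj k u) = length u"
  by (simp add: swap_adj_def)

lemma nth_swap_adj:
  assumes "1 \<le> k" "k < length u" "i < length u"
  shows "swap_adj k u ! i = (if i = k - 1 then u ! k else if i = k then u ! (k - 1) else u ! i)"
  using assms by (auto simp: swap_adj_def nth_list_update)

lemma swap_adj_swap_adj: "1 \<le> k \<Longrightarrow> k < length u \<Longrightarrow> swap_adj k (swap_adj k u) = u"
  by (rule nth_equalityI) (auto simp: nth_swap_adj)

lemma distinct_swap_adj [simp]: "1 \<le> k \<Longrightarrow> k < length u \<Longrightarrow> distinct (swap_adj k u) = distinct u"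
  by (simp add: swap_adj_def)

lemma swap_adj_commute:
  assumes "1 \<le> i" "i < length u" "1 \<le> j" "j < length u" "i + 2 \<le> j \<or> j + 2 \<le> i"
  shows "swap_adj i (swap_adj j u) = swap_adj j (swap_adj i u)"
  using assms by (intro nth_equalityI) (auto simp: nth_swap_adj)

lemma swap_adj_braid:
  assumes "1 \<le> i" "i + 1 < length u"
  shows "swap_adj (i + 1) (swap_adj i (swap_adj (i + 1) u)) = swap_adj i (swap_adj (i + 1) (swap_adj i u))"
  using assms by (intro nth_equalityI) (auto simp: nth_swap_adj)

lemma swap_adj_append: "swap_adj (Suc (length A)) (A @ x # y # B) = A @ y # x # B"
  by (simp add: swap_adj_def nth_append list_update_append)

definition precedes :: "'a list \<Rightarrow> 'a \<Rightarrow> 'a \<Rightarrow> bool" where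
  "precedes u x y \<longleftrightarrow> (\<exists>i j. i < j \<and> j < length u \<and> u ! i = x \<and> u ! j = y)"

lemma precedes_swap_adj:
  assumes k: "1 \<le> k" "k < length u" and xy: "{x, y} \<noteq> {u ! (k - 1), u ! k}"
  shows "precedes (swap_adj k u) x y = precedes u x y"
proof -
  have reflect: "precedes v x y"
    if kv: "1 \<le> k" "k < length v" and xyv: "{x, y} \<noteq> {v ! (k - 1), v ! k}"
      and "precedes (swap_adj k v) x y"
    for v :: "'a list"
  proof -
    obtain i j where ij: "i < j" "j < length v" "swap_adj k v ! i = x" "swap_adj k v ! j = y"
      using \<open>precedes (swap_adj k v) x y\<close> by (auto simp: precedes_def)
    define s where "s = (\<lambda>i. if i = k - 1 then k else if i = k then k - 1 else i)"
    have e: "swap_adj k v ! m = v ! s m" if "m < length v" for m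
      using nth_swap_adj[OF kv that] kv by (auto simp: s_def)
    have "\<not> (i = k - 1 \<and> j = k)" using ij xyv e by (auto simp: s_def)
    hence "s i < s j" using ij kv by (auto simp: s_def)
    moreover have "s j < length v" using ij kv by (auto simp: s_def)
    moreover have "v ! s i = x" "v ! s j = y" using ij e[of i] e[of j] by auto
    ultimately show ?thesis unfolding precedes_def by blast
  qed
  have "{swap_adj k u ! (k - 1), swap_adj k u ! k} = {u ! (k - 1), u ! k}"
    using k by (auto simp: nth_swap_adj)
  then show ?thesis
    using reflect[OF k xy] reflect[of "swap_adj k u"] k xy swap_adj_swap_adj[OF k] by auto
qed

lemma precedes_swap_adj_pair:
  "1 \<le> k \<Longrightarrow> k < length u \<Longrightarrow> precedes (swap_adj k u) (u ! k) (u ! (k - 1))"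
  unfolding precedes_def by (rule exI[of _ "k - 1"], rule exI[of _ k]) (auto simp: nth_swap_adj)

lemma precedes_asym: "distinct u \<Longrightarrow> precedes u x y \<Longrightarrow> \<not> precedes u y x"
  unfolding precedes_def by (metis nth_eq_iff_index_eq order.strict_trans not_less_iff_gr_or_eq)

lemma precedes_first_third: "precedes (A @ x # y # z # B) x z"
  unfolding precedes_def
  by (intro exI[of _ "length A"] exI[of _ "length A + 2"]) (auto simp: nth_append)

lemma precedes_reverse_three:
  assumes "\<not> (x \<in> {p, q, r} \<and> y \<in> {p, q, r})"
  shows "precedes (A @ r # q # p # B) x y = precedes (A @ p # q # r # B) x y"
proof -
  have ne: "{x, y} \<noteq> {s, t}" if "s \<in> {p, q, r}" "t \<in> {p, q, r}" for s t
    using assms that by (auto simp: doubleton_eq_iff)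
  have "precedes (A @ q # p # r # B) x y = precedes (A @ p # q # r # B) x y"
    using precedes_swap_adj[of "Suc (length A)" "A @ p # q # r # B" x y] ne[of p q]
    by (simp add: swap_adj_append nth_append)
  moreover have "precedes ((A @ [q]) @ r # p # B) x y = precedes ((A @ [q]) @ p # r # B) x y"
    using precedes_swap_adj[of "Suc (length (A @ [q]))" "(A @ [q]) @ p # r # B" x y] ne[of p r]
    by (simp only: swap_adj_append) (simp add: nth_append)
  moreover have "precedes (A @ r # q # p # B) x y = precedes (A @ q # r # p # B) x y"
    using precedes_swap_adj[of "Suc (length A)" "A @ q # r # p # B" x y] ne[of q r]
    by (simp add: swap_adj_append nth_append)
  ultimately show ?thesis by simp
qed

subsection \<open>Reduced words\<close>

lemma act_Nil [simp]: "act [] u = u"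
  by (simp add: act_def)

lemma act_Cons [simp]: "act (k # ks) u = act ks (swap_adj k u)"
  by (simp add: act_def)

lemma act_append [simp]: "act (xs @ ys) u = act ys (act xs u)"
  by (simp add: act_def)

lemma length_act [simp]: "length (act a u) = length u"
  by (induction a arbitrary: u) auto

definition valid_word :: "nat \<Rightarrow> nat list \<Rightarrow> bool" where
  "valid_word n a \<longleftrightarrow> (\<forall>k \<in> set a. 1 \<le> k \<and> k < n)"

lemma valid_word_simps [simp]:
  "valid_word n []"
  "valid_word n (k # ks) \<longleftrightarrow> 1 \<le> k \<and> k < n \<and> valid_word n ks"
  "valid_word n (xs @ ys) \<longleftrightarrow> valid_word n xs \<and> valid_word n ys"
  by (auto simp: valid_word_def)

lemma distinct_act: "valid_word (length u) a \<Longrightarrow> distinct (act a u) = distinct u"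
  by (induction a arbitrary: u) auto

lemma id_perm_simps [simp]:
  "length (id_perm n) = n" "distinct (id_perm n)" "i < n \<Longrightarrow> id_perm n ! i = Suc i"
  by (auto simp: id_perm_def nth_upt simp del: upt_Suc)

definition inversions :: "nat list \<Rightarrow> (nat \<times> nat) set" where
  "inversions w = {(i, j). i < j \<and> j < length w \<and> w ! i > w ! j}"

lemma inv_count_eq_card_inversions: "inv_count w = card (inversions w)"
  by (simp add: inv_count_def inversions_def)

lemma finite_inversions [simp]: "finite (inversions w)"
  by (rule finite_subset[of _ "{..<length w} \<times> {..<length w}"]) (auto simp: inversions_def)

lemma inv_count_id_perm [simp]: "inv_count (id_perm n) = 0"
proof -
  have "inversions (id_perm n) = {}" by (auto simp: inversions_def)
  then show ?thesis by (simp add: inv_count_eq_card_inversions)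
qed

text \<open>Conjugating positions by the transposition of \<open>k - 1\<close> and \<open>k\<close> is a bijection between
  the inversions of \<open>u\<close> and of \<open>swap_adj k u\<close>, apart from the pair \<open>(k - 1, k)\<close> itself.\<close>

lemma card_inversions_swap_adj:
  assumes k: "1 \<le> k" "k < length u"
  shows "card (inversions (swap_adj k u) - {(k - 1, k)}) = card (inversions u - {(k - 1, k)})"
proof -
  define s where "s = (\<lambda>i. if i = k - 1 then k else if i = k then k - 1 else i)"
  have e: "swap_adj k u ! m = u ! s m" if "m < length u" for m
    using nth_swap_adj[OF k that] k by (auto simp: s_def)
  have ss: "s (s i) = i" for i using k by (auto simp: s_def)
  have sl: "i < length u \<Longrightarrow> s i < length u" for i using k by (auto simp: s_def)
  have mono: "i < j \<Longrightarrow> (i, j) \<noteq> (k - 1, k) \<Longrightarrow> s i < s j" for i j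
    using k by (auto simp: s_def)
  have pair: "(s i, s j) = (k - 1, k) \<longleftrightarrow> (i, j) = (k, k - 1)" for i j
    using k by (auto simp: s_def)
  let ?f = "\<lambda>(i, j). (s i, s j)"
  have inj: "inj_on ?f X" for X
    by (rule inj_on_inverseI[where g = ?f]) (auto simp: ss)
  have "?f ` (inversions (swap_adj k u) - {(k - 1, k)}) = inversions u - {(k - 1, k)}"
  proof (rule set_eqI, rule iffI)
    fix x assume "x \<in> ?f ` (inversions (swap_adj k u) - {(k - 1, k)})"
    then obtain i j where "x = (s i, s j)" "i < j" "j < length u"
        "swap_adj k u ! i > swap_adj k u ! j" "(i, j) \<noteq> (k - 1, k)"
      by (auto simp: inversions_def)
    then show "x \<in> inversions u - {(k - 1, k)}"
      using mono[of i j] sl[of j] e[of i] e[of j] pair[of i j] by (auto simp: inversions_def)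
  next
    fix x assume "x \<in> inversions u - {(k - 1, k)}"
    then obtain i j where x: "x = (i, j)" and ij: "i < j" "j < length u" "u ! i > u ! j"
        "(i, j) \<noteq> (k - 1, k)"
      by (auto simp: inversions_def)
    have "(s i, s j) \<in> inversions (swap_adj k u) - {(k - 1, k)}"
      using mono[of i j] pair[of i j] sl[of j] e[of "s i"] e[of "s j"] sl[of i] ss ij
      by (auto simp: inversions_def)
    moreover have "x = ?f (s i, s j)" using x ss by simp
    ultimately show "x \<in> ?f ` (inversions (swap_adj k u) - {(k - 1, k)})" by blast
  qed
  then show ?thesis using card_image[OF inj] by metis
qed

lemma inv_count_swap_adj:
  assumes k: "1 \<le> k" "k < length u" and "distinct u"
  shows "inv_count (swap_adj k u) = (if u ! (k - 1) < u ! k then inv_count u + 1 else inv_count u - 1)"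
    and "\<not> u ! (k - 1) < u ! k \<Longrightarrow> 0 < inv_count u"
proof -
  have card_split: "card A = card (A - {x}) + (if x \<in> A then 1 else 0)" if "finite A" for A and x :: "nat \<times> nat"
    using card.remove[OF that, of x] by auto
  have ne: "u ! (k - 1) \<noteq> u ! k" using assms by (simp add: nth_eq_iff_index_eq)
  have "(k - 1, k) \<in> inversions (swap_adj k u) \<longleftrightarrow> u ! (k - 1) < u ! k"
    using k by (auto simp: inversions_def nth_swap_adj)
  then have c1: "inv_count (swap_adj k u) =
      card (inversions (swap_adj k u) - {(k - 1, k)}) + (if u ! (k - 1) < u ! k then 1 else 0)"
    unfolding inv_count_eq_card_inversions using card_split[OF finite_inversions] by presburger
  have "(k - 1, k) \<in> inversions u \<longleftrightarrow> u ! (k - 1) > u ! k"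
    using k by (auto simp: inversions_def)
  then have c2: "inv_count u = card (inversions u - {(k - 1, k)}) + (if u ! (k - 1) > u ! k then 1 else 0)"
    unfolding inv_count_eq_card_inversions using card_split[OF finite_inversions] by presburger
  show "inv_count (swap_adj k u) = (if u ! (k - 1) < u ! k then inv_count u + 1 else inv_count u - 1)"
    and "\<not> u ! (k - 1) < u ! k \<Longrightarrow> 0 < inv_count u"
    using c1 c2 card_inversions_swap_adj[OF k] ne by auto
qed

fun ascending_steps :: "nat list \<Rightarrow> nat list \<Rightarrow> bool" where
  "ascending_steps [] u \<longleftrightarrow> True"
| "ascending_steps (k # ks) u \<longleftrightarrow> u ! (k - 1) < u ! k \<and> ascending_steps ks (swap_adj k u)"

lemma ascending_steps_append [simp]:
  "ascending_steps (xs @ ys) u \<longleftrightarrow> ascending_steps xs u \<and> ascending_steps ys (act xs u)"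
  by (induction xs arbitrary: u) auto

lemma inv_count_act:
  assumes "valid_word (length u) a" "distinct u"
  shows "inv_count (act a u) \<le> inv_count u + length a
    \<and> (inv_count (act a u) = inv_count u + length a \<longleftrightarrow> ascending_steps a u)"
  using assms
proof (induction a arbitrary: u)
  case (Cons k ks)
  have k: "1 \<le> k" "k < length u" and "valid_word (length (swap_adj k u)) ks" "distinct (swap_adj k u)"
    using Cons.prems by auto
  note IH = Cons.IH[OF this(3,4)]
  show ?case
  proof (cases "u ! (k - 1) < u ! k")
    case True then show ?thesis using IH inv_count_swap_adj[OF k Cons.prems(2)] by simp
  next
    case False then show ?thesis using IH inv_count_swap_adj[OF k Cons.prems(2)] by auto
  qed
qed simp

definition reduced :: "nat \<Rightarrow> nat list \<Rightarrow> bool" where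
  "reduced n a \<longleftrightarrow> valid_word n a \<and> ascending_steps a (id_perm n)"

lemma reduced_iff_inv_count: "reduced n a \<longleftrightarrow> valid_word n a \<and> inv_count (act a (id_perm n)) = length a"
  using inv_count_act[of "id_perm n" a] by (auto simp: reduced_def)

lemma reduced_words_iff:
  "length w = n \<Longrightarrow> a \<in> reduced_words w \<longleftrightarrow> reduced n a \<and> act a (id_perm n) = w"
  unfolding reduced_iff_inv_count reduced_words_def valid_word_def by (auto simp: subset_iff)

lemma reduced_snoc:
  "reduced n (c @ [e]) \<longleftrightarrow>
     reduced n c \<and> 1 \<le> e \<and> e < n \<and> act c (id_perm n) ! (e - 1) < act c (id_perm n) ! e"
  by (auto simp: reduced_def)

lemma last_letter_descent:
  assumes "reduced n (c @ [e])"
  shows "act (c @ [e]) (id_perm n) ! e < act (c @ [e]) (id_perm n) ! (e - 1)"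
  using assms by (auto simp: reduced_snoc nth_swap_adj)

lemma distinct_act_id_perm: "reduced n a \<Longrightarrow> distinct (act a (id_perm n))"
  using distinct_act[of "id_perm n" a] by (simp add: reduced_def)

subsection \<open>The sequence of transposed pairs\<close>

text \<open>\<open>P_step n a p q\<close> is the (1-based) position of \<open>{p, q}\<close> in
  \<open>transposed_pairs a (id_perm n)\<close>.\<close>

fun transposed_pairs :: "nat list \<Rightarrow> nat list \<Rightarrow> nat set list" where
  "transposed_pairs [] u = []"
| "transposed_pairs (k # ks) u = {u ! (k - 1), u ! k} # transposed_pairs ks (swap_adj k u)"

lemma transposed_pairs_append [simp]:
  "transposed_pairs (xs @ ys) u = transposed_pairs xs u @ transposed_pairs ys (act xs u)"
  by (induction xs arbitrary: u) auto

lemma length_transposed_pairs [simp]: "length (transposed_pairs a u) = length a"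
  by (induction a arbitrary: u) auto

lemma nth_transposed_pairs:
  "j < length a \<Longrightarrow>
     transposed_pairs a u ! j = {act (take j a) u ! (a ! j - 1), act (take j a) u ! (a ! j)}"
proof (induction a arbitrary: u j)
  case (Cons k ks) then show ?case by (cases j) auto
qed simp

lemma ascending_step_preserves_inversion:
  fixes u :: "'a :: linorder list"
  assumes k: "1 \<le> k" "k < length u" and "distinct u" and "u ! (k - 1) < u ! k"
    and "p < q" and "precedes u q p"
  shows "{u ! (k - 1), u ! k} \<noteq> {p, q}" and "precedes (swap_adj k u) q p"
proof -
  show ne: "{u ! (k - 1), u ! k} \<noteq> {p, q}"
  proof
    assume "{u ! (k - 1), u ! k} = {p, q}"
    then have "u ! (k - 1) = p \<and> u ! k = q \<or> u ! (k - 1) = q \<and> u ! k = p"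
      by (auto simp: doubleton_eq_iff)
    then have "u ! (k - 1) = p" "u ! k = q" using assms(4,5) by auto
    then have "precedes u p q" unfolding precedes_def using k
      by (intro exI[of _ "k - 1"] exI[of _ k]) auto
    then show False using precedes_asym[OF \<open>distinct u\<close>] \<open>precedes u q p\<close> by blast
  qed
  show "precedes (swap_adj k u) q p"
    using precedes_swap_adj[OF k, of q p] ne \<open>precedes u q p\<close> by (auto simp: insert_commute)
qed

lemma inversion_never_transposed:
  assumes "ascending_steps a u" "distinct u" "valid_word (length u) a" "p < q" "precedes u q p"
  shows "{p, q} \<notin> set (transposed_pairs a u)"
  using assms
proof (induction a arbitrary: u)
  case (Cons k ks)
  have k: "1 \<le> k" "k < length u" using Cons.prems by auto
  show ?case
    using Cons.prems ascending_step_preserves_inversion[OF k, of p q] Cons.IH[of "swap_adj k u"] k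
    by auto
qed simp

lemma distinct_transposed_pairs:
  assumes "ascending_steps a u" "distinct u" "valid_word (length u) a"
  shows "distinct (transposed_pairs a u)"
  using assms
proof (induction a arbitrary: u)
  case (Cons k ks)
  have k: "1 \<le> k" "k < length u" and asc: "u ! (k - 1) < u ! k"
    and ks: "ascending_steps ks (swap_adj k u)" using Cons.prems by auto
  have "{u ! (k - 1), u ! k} \<notin> set (transposed_pairs ks (swap_adj k u))"
    using inversion_never_transposed[OF ks _ _ asc precedes_swap_adj_pair[OF k]] Cons.prems k by auto
  then show ?case using Cons.IH[OF ks] Cons.prems k by auto
qed simp

lemma precedes_act_untransposed:
  assumes "valid_word (length u) a" "{p, q} \<notin> set (transposed_pairs a u)"
  shows "precedes (act a u) p q = precedes u p q"
  using assms
proof (induction a arbitrary: u)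
  case (Cons k ks)
  have k: "1 \<le> k" "k < length u" using Cons.prems by auto
  have "{p, q} \<noteq> {u ! (k - 1), u ! k}" using Cons.prems by auto
  then show ?case using Cons.prems Cons.IH[of "swap_adj k u"] precedes_swap_adj[OF k] k by auto
qed simp

lemma inversion_transposed:
  assumes "valid_word n a" "p < q" "precedes (act a (id_perm n)) q p"
  shows "{p, q} \<in> set (transposed_pairs a (id_perm n))"
proof (rule ccontr)
  assume "{p, q} \<notin> set (transposed_pairs a (id_perm n))"
  then have "precedes (id_perm n) q p"
    using precedes_act_untransposed[of "id_perm n" a q p] assms by (simp add: insert_commute)
  then show False using \<open>p < q\<close> unfolding precedes_def by auto
qed

lemma P_step_nth_transposed_pairs:
  assumes "distinct (transposed_pairs a (id_perm n))" "j < length a"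
    and "transposed_pairs a (id_perm n) ! j = {p, q}"
  shows "P_step n a p q = Suc j"
  unfolding P_step_def
proof (rule Least_equality)
  show "1 \<le> Suc j \<and> Suc j \<le> length a \<and> (let u = act (take (Suc j - 1) a) (id_perm n);
    k = a ! (Suc j - 1) in {u ! (k - 1), u ! k} = {p, q})"
    using assms(2,3) nth_transposed_pairs[OF assms(2)] by (simp add: Let_def)
next
  fix i assume "1 \<le> i \<and> i \<le> length a \<and> (let u = act (take (i - 1) a) (id_perm n);
    k = a ! (i - 1) in {u ! (k - 1), u ! k} = {p, q})"
  then have "i - 1 < length a" "transposed_pairs a (id_perm n) ! (i - 1) = {p, q}"
    using nth_transposed_pairs[of "i - 1" a] by (auto simp: Let_def)
  then have "i - 1 = j" using assms(2,3) nth_eq_iff_index_eq[OF assms(1)] by (metis length_transposed_pairs)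
  then show "Suc j \<le> i" using \<open>1 \<le> i \<and> _\<close> by auto
qed

lemma P_step_less_iff_precedes:
  assumes "distinct (transposed_pairs a (id_perm n))"
    and "{p, q} \<in> set (transposed_pairs a (id_perm n))" "{p', q'} \<in> set (transposed_pairs a (id_perm n))"
  shows "P_step n a p q < P_step n a p' q' \<longleftrightarrow> precedes (transposed_pairs a (id_perm n)) {p, q} {p', q'}"
proof -
  let ?L = "transposed_pairs a (id_perm n)"
  obtain i j where ij: "i < length a" "j < length a" "?L ! i = {p, q}" "?L ! j = {p', q'}"
    using assms(2,3) by (auto simp: in_set_conv_nth)
  have "precedes ?L (?L ! i') (?L ! j') \<longleftrightarrow> i' < j'" if "i' < length a" "j' < length a" for i' j'
    using assms(1) that unfolding precedes_def by (auto simp: nth_eq_iff_index_eq)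
  from this[OF ij(1,2)] show ?thesis
    using ij P_step_nth_transposed_pairs[OF assms(1)] by simp
qed

lemma sup_set_eq:
  assumes "reduced n a"
  shows "sup_set (act a (id_perm n)) a =
    {(x, y, z) \<in> triples (act a (id_perm n)). precedes (transposed_pairs a (id_perm n)) {z, y} {y, x}}"
proof -
  let ?w = "act a (id_perm n)" and ?L = "transposed_pairs a (id_perm n)"
  have v: "valid_word n a" and "ascending_steps a (id_perm n)" using assms by (auto simp: reduced_def)
  then have dL: "distinct ?L" using distinct_transposed_pairs[of a "id_perm n"] by simp
  have "Gamma n a (x, y, z) \<longleftrightarrow> precedes ?L {z, y} {y, x}" if t: "(x, y, z) \<in> triples ?w" for x y z
  proof -
    obtain i j k where "x < y" "y < z" "i < j" "j < k" "k < length ?w" "?w ! i = z" "?w ! j = y" "?w ! k = x"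
      using t unfolding triples_def by blast
    then have "precedes ?w y x" "precedes ?w z y"
      unfolding precedes_def by (blast intro: less_trans)+
    then have "{x, y} \<in> set ?L" "{y, z} \<in> set ?L"
      using inversion_transposed[OF v] \<open>x < y\<close> \<open>y < z\<close> by blast+
    then show ?thesis
      unfolding Gamma_def using P_step_less_iff_precedes[OF dL] by (simp add: insert_commute)
  qed
  then show ?thesis unfolding sup_set_def by auto
qed

subsection \<open>Commutation classes\<close>

lemma comm_class_refl [simp]: "a \<in> comm_class a"
  by (simp add: comm_class_def)

lemma comm_class_trans: "b \<in> comm_class a \<Longrightarrow> c \<in> comm_class b \<Longrightarrow> c \<in> comm_class a"
  unfolding comm_class_def by (auto elim: rtrancl_trans)

lemma comm_class_sym: "b \<in> comm_class a \<Longrightarrow> a \<in> comm_class b"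
proof -
  have "sym {(x, y). comm_step x y}"
    unfolding sym_def comm_step_def by blast
  then have "sym ({(x, y). comm_step x y}\<^sup>*)" by (rule sym_rtrancl)
  then show "b \<in> comm_class a \<Longrightarrow> a \<in> comm_class b"
    unfolding comm_class_def by (blast dest: symD)
qed

lemma comm_class_append: "b \<in> comm_class a \<Longrightarrow> b @ c \<in> comm_class (a @ c)"
proof -
  assume "b \<in> comm_class a"
  then have "(a, b) \<in> {(x, y). comm_step x y}\<^sup>*" by (simp add: comm_class_def)
  then have "(a @ c, b @ c) \<in> {(x, y). comm_step x y}\<^sup>*"
  proof (induction rule: rtrancl_induct)
    case (step y z)
    then obtain xs i j ys where "y = xs @ [i, j] @ ys" "z = xs @ [j, i] @ ys" "i + 2 \<le> j \<or> j + 2 \<le> i"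
      unfolding comm_step_def by blast
    then have "comm_step (y @ c) (z @ c)"
      unfolding comm_step_def by (intro exI[of _ xs] exI[of _ i] exI[of _ j] exI[of _ "ys @ c"]) simp
    with step.IH show ?case by (simp add: rtrancl_into_rtrancl)
  qed simp
  then show ?thesis by (simp add: comm_class_def)
qed

lemma comm_class_swap_last: "i + 2 \<le> j \<or> j + 2 \<le> i \<Longrightarrow> c @ [j, i] \<in> comm_class (c @ [i, j])"
proof -
  assume "i + 2 \<le> j \<or> j + 2 \<le> i"
  then have "comm_step (c @ [i, j]) (c @ [j, i])"
    unfolding comm_step_def by (intro exI[of _ c] exI[of _ i] exI[of _ j] exI[of _ "[]"]) auto
  then show ?thesis by (auto simp: comm_class_def)
qed

lemma comm_step_invariants:
  assumes "comm_step a b" and "reduced n a"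
  shows "reduced n b \<and> act b (id_perm n) = act a (id_perm n)
     \<and> sup_set (act a (id_perm n)) b = sup_set (act a (id_perm n)) a"
proof -
  obtain xs i j ys where ab: "a = xs @ [i, j] @ ys" "b = xs @ [j, i] @ ys"
    and ij: "i + 2 \<le> j \<or> j + 2 \<le> i"
    using assms(1) unfolding comm_step_def by blast
  have va: "valid_word n a" using assms(2) by (simp add: reduced_def)
  then have vb: "valid_word n b" using ab by auto
  have iv: "1 \<le> i" "i < n" "1 \<le> j" "j < n" using va ab by auto
  define u where "u = act xs (id_perm n)"
  have lu: "length u = n" by (simp add: u_def)
  have du: "distinct u" unfolding u_def using va ab by (subst distinct_act) auto
  have sc: "swap_adj i (swap_adj j u) = swap_adj j (swap_adj i u)"
    using swap_adj_commute[of i u j] iv ij lu by auto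
  have act_eq: "act b (id_perm n) = act a (id_perm n)" using ab sc by (simp add: u_def)
  have rb: "reduced n b" using assms(2) vb act_eq ab by (simp add: reduced_iff_inv_count)
  define S1 where "S1 = {u ! (i - 1), u ! i}"
  define S2 where "S2 = {u ! (j - 1), u ! j}"
  define B where "B = transposed_pairs ys (act [i, j] u)"
  define A where "A = transposed_pairs xs (id_perm n)"
  have "swap_adj i u ! (j - 1) = u ! (j - 1)" "swap_adj i u ! j = u ! j"
    "swap_adj j u ! (i - 1) = u ! (i - 1)" "swap_adj j u ! i = u ! i"
    using iv ij lu by (auto simp: nth_swap_adj)
  then have La: "transposed_pairs a (id_perm n) = A @ S1 # S2 # B"
    and "transposed_pairs b (id_perm n) = A @ S2 # S1 # B"
    using ab sc by (simp_all add: u_def[symmetric] S1_def S2_def B_def A_def)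
  then have Lb: "transposed_pairs b (id_perm n) = swap_adj (Suc (length A)) (transposed_pairs a (id_perm n))"
    unfolding La by (simp add: swap_adj_append)
  have "S1 \<inter> S2 = {}"
    unfolding S1_def S2_def using du lu iv ij by (auto simp: nth_eq_iff_index_eq)
  then have "{{z, y}, {y, x}} \<noteq> {S1, S2}" for x y z :: nat
    by (auto simp: doubleton_eq_iff)
  moreover have "1 \<le> Suc (length A)" "Suc (length A) < length (transposed_pairs a (id_perm n))"
    "transposed_pairs a (id_perm n) ! (Suc (length A) - 1) = S1"
    "transposed_pairs a (id_perm n) ! Suc (length A) = S2"
    unfolding La by (auto simp: nth_append)
  ultimately have "precedes (transposed_pairs b (id_perm n)) {z, y} {y, x}
      = precedes (transposed_pairs a (id_perm n)) {z, y} {y, x}" for x y z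
    unfolding Lb using precedes_swap_adj[of "Suc (length A)" "transposed_pairs a (id_perm n)"] by simp
  then have "sup_set (act a (id_perm n)) b = sup_set (act a (id_perm n)) a"
    unfolding sup_set_eq[OF assms(2)] sup_set_eq[OF rb, unfolded act_eq] by simp
  then show ?thesis using rb act_eq by simp
qed

lemma comm_class_invariants:
  assumes "b \<in> comm_class a" "reduced n a"
  shows "reduced n b \<and> act b (id_perm n) = act a (id_perm n)
     \<and> sup_set (act a (id_perm n)) b = sup_set (act a (id_perm n)) a"
proof -
  have "(a, b) \<in> {(x, y). comm_step x y}\<^sup>*" using assms(1) by (simp add: comm_class_def)
  then show ?thesis
  proof (induction rule: rtrancl_induct)
    case (step y z)
    then show ?case using comm_step_invariants[of y z n] by simp
  qed (use assms(2) in simp)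
qed

definition can_end_with :: "nat list \<Rightarrow> nat \<Rightarrow> bool" where
  "can_end_with a d \<longleftrightarrow> (\<exists>c. c @ [d] \<in> comm_class a)"

lemma can_end_with_snoc_far:
  assumes "can_end_with c d" "e + 2 \<le> d \<or> d + 2 \<le> e"
  shows "can_end_with (c @ [e]) d"
proof -
  obtain c' where "c' @ [d] \<in> comm_class c" using assms(1) by (auto simp: can_end_with_def)
  then have "c' @ [d, e] \<in> comm_class (c @ [e])" using comm_class_append by fastforce
  moreover have "c' @ [e, d] \<in> comm_class (c' @ [d, e])" using comm_class_swap_last assms(2) by auto
  ultimately have "(c' @ [e]) @ [d] \<in> comm_class (c @ [e])"
    using comm_class_trans[of "c' @ [d, e]"] by simp
  then show ?thesis unfolding can_end_with_def by blast
qed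

lemma comm_class_snoc_braid:
  assumes "c1 @ [j] \<in> comm_class c" "c2 @ [i] \<in> comm_class c1"
  shows "c2 @ [i, j, i] \<in> comm_class (c @ [i])"
proof -
  have "c2 @ [i, j] \<in> comm_class (c1 @ [j])"
    using comm_class_append[OF assms(2), of "[j]"] by simp
  then have "c2 @ [i, j] \<in> comm_class c" using comm_class_trans[OF assms(1)] by blast
  then show ?thesis using comm_class_append[of "c2 @ [i, j]" c "[i]"] by simp
qed

lemma comm_class_snoc:
  assumes "c @ [d] \<in> comm_class a" and "reduced n a"
  shows "reduced n c" and "act c (id_perm n) = swap_adj d (act a (id_perm n))"
    and "length a = Suc (length c)"
proof -
  note inv = comm_class_invariants[OF assms]
  then show rc: "reduced n c" by (simp add: reduced_snoc)
  have d: "1 \<le> d" "d < n" using inv by (simp_all add: reduced_snoc)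
  have "swap_adj d (act c (id_perm n)) = act a (id_perm n)" using inv by simp
  then show "act c (id_perm n) = swap_adj d (act a (id_perm n))"
    using swap_adj_swap_adj[of d "act c (id_perm n)"] d by auto
  have "length (c @ [d]) = length a"
    using inv assms(2) unfolding reduced_iff_inv_count by metis
  then show "length a = Suc (length c)" by simp
qed

lemma inv_count_comm_class_snoc:
  assumes "c @ [d] \<in> comm_class a" and "reduced n a"
  shows "inv_count (act a (id_perm n)) = Suc (inv_count (swap_adj d (act a (id_perm n))))"
  using comm_class_snoc[OF assms] assms(2) by (simp add: reduced_iff_inv_count)

subsection \<open>Braid moves\<close>

lemma braid_local:
  assumes "1 \<le> i" "i + 1 < length u"
  shows "act [i, i + 1, i] u = act [i + 1, i, i + 1] u"
    and "act [i + 1, i, i + 1] u ! (i - 1) = u ! (i + 1)"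
    and "act [i + 1, i, i + 1] u ! i = u ! i"
    and "act [i + 1, i, i + 1] u ! (i + 1) = u ! (i - 1)"
    and "ascending_steps [i + 1, i, i + 1] u \<longleftrightarrow> u ! (i - 1) < u ! i \<and> u ! i < u ! (i + 1)"
    and "transposed_pairs [i + 1, i, i + 1] u =
      [{u ! i, u ! (i + 1)}, {u ! (i - 1), u ! (i + 1)}, {u ! (i - 1), u ! i}]"
    and "transposed_pairs [i, i + 1, i] u =
      [{u ! (i - 1), u ! i}, {u ! (i - 1), u ! (i + 1)}, {u ! i, u ! (i + 1)}]"
  using assms swap_adj_braid[OF assms] by (auto simp: nth_swap_adj insert_commute)

lemma act_braid:
  assumes "valid_word (length u) (xs @ [i + 1, i, i + 1] @ ys)"
  shows "act (xs @ [i, i + 1, i] @ ys) u = act (xs @ [i + 1, i, i + 1] @ ys) u"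
  using assms braid_local(1)[of i "act xs u"] by simp

lemma reduced_braid_iff:
  "reduced n (xs @ [i + 1, i, i + 1] @ ys) \<longleftrightarrow> reduced n (xs @ [i, i + 1, i] @ ys)"
  using act_braid[of "id_perm n" xs i ys] by (auto simp: reduced_iff_inv_count)

lemma triple_in_triples:
  assumes "distinct w" "x < y" "y < z" "precedes w z y" "precedes w y x"
  shows "(x, y, z) \<in> triples w"
proof -
  obtain i j where "i < j" "j < length w" "w ! i = z" "w ! j = y"
    using assms(4) by (auto simp: precedes_def)
  moreover obtain j' k where "j' < k" "k < length w" "w ! j' = y" "w ! k = x"
    using assms(5) by (auto simp: precedes_def)
  moreover have "j' = j"
    using calculation assms(1) by (metis nth_eq_iff_index_eq order.strict_trans)
  ultimately show ?thesis unfolding triples_def using assms(2,3) by blast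
qed

lemma transposed_pairs_braid:
  fixes xs ys :: "nat list" and i :: nat
  defines "a \<equiv> xs @ [i + 1, i, i + 1] @ ys" and "b \<equiv> xs @ [i, i + 1, i] @ ys"
  assumes "reduced n a"
  obtains p q r A B where "p < q" "q < r" "(p, q, r) \<in> triples (act a (id_perm n))"
    "transposed_pairs a (id_perm n) = A @ {q, r} # {p, r} # {p, q} # B"
    "transposed_pairs b (id_perm n) = A @ {p, q} # {p, r} # {q, r} # B"
proof -
  have va: "valid_word n a" and asc: "ascending_steps a (id_perm n)"
    using assms(3) by (auto simp: reduced_def)
  have i: "1 \<le> i" "i + 1 < n" using va by (auto simp: a_def)
  define u where "u = act xs (id_perm n)"
  define v where "v = act [i + 1, i, i + 1] u"
  define p where "p = u ! (i - 1)"
  define q where "q = u ! i"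
  define r where "r = u ! (i + 1)"
  have lu: "length u = n" by (simp add: u_def)
  note local = braid_local[of i u, folded v_def p_def q_def r_def, OF i(1) i(2)[folded lu]]
  have "distinct u" using va distinct_act[of "id_perm n" xs] by (simp add: u_def a_def)
  then have dv: "distinct v" using i lu by (simp add: v_def distinct_act)
  have pqr: "p < q" "q < r" using asc local(5) by (simp_all add: a_def u_def)
  have vys: "valid_word (length v) ys" and ys: "ascending_steps ys v"
    using va asc lu by (simp_all add: a_def u_def v_def)
  have "precedes v r q"
    unfolding precedes_def using local(2,3) i lu by (intro exI[of _ "i - 1"] exI[of _ i]) (auto simp: v_def)
  moreover have "precedes v q p"
    unfolding precedes_def using local(3,4) i lu by (intro exI[of _ i] exI[of _ "i + 1"]) (auto simp: v_def)
  ultimately have "precedes (act ys v) r q" "precedes (act ys v) q p"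
    using precedes_act_untransposed[OF vys] inversion_never_transposed[OF ys dv vys] pqr
    by (metis insert_commute)+
  moreover have "act a (id_perm n) = act ys v" by (simp add: a_def u_def v_def)
  ultimately have "(p, q, r) \<in> triples (act a (id_perm n))"
    using triple_in_triples[OF distinct_act_id_perm[OF assms(3)] pqr] by simp
  moreover have "transposed_pairs a (id_perm n) =
      transposed_pairs xs (id_perm n) @ {q, r} # {p, r} # {p, q} # transposed_pairs ys v"
    using local(6) by (simp add: a_def u_def[symmetric] v_def)
  moreover have "transposed_pairs b (id_perm n) =
      transposed_pairs xs (id_perm n) @ {p, q} # {p, r} # {q, r} # transposed_pairs ys v"
    using local(1,7) by (simp add: b_def u_def[symmetric] v_def)
  ultimately show ?thesis using that pqr by blast
qed

lemma sup_set_braid: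
  fixes xs ys :: "nat list" and i :: nat
  defines "a \<equiv> xs @ [i + 1, i, i + 1] @ ys" and "b \<equiv> xs @ [i, i + 1, i] @ ys"
  assumes "reduced n a"
  shows "\<exists>t \<in> sup_set (act a (id_perm n)) a.
    sup_set (act a (id_perm n)) b = sup_set (act a (id_perm n)) a - {t}"
proof -
  let ?w = "act a (id_perm n)"
  obtain p q r A B where pqr: "p < q" "q < r" and t: "(p, q, r) \<in> triples ?w"
    and La: "transposed_pairs a (id_perm n) = A @ {q, r} # {p, r} # {p, q} # B"
    and Lb: "transposed_pairs b (id_perm n) = A @ {p, q} # {p, r} # {q, r} # B"
    using transposed_pairs_braid assms(3) unfolding a_def b_def by blast
  have rb: "reduced n b" and act_eq: "act b (id_perm n) = ?w"
    using assms(3) reduced_braid_iff act_braid[of "id_perm n"] by (auto simp: a_def b_def reduced_def)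
  have dLb: "distinct (transposed_pairs b (id_perm n))"
    using rb distinct_transposed_pairs[of b "id_perm n"] by (simp add: reduced_def)
  have in_a: "(p, q, r) \<in> sup_set ?w a"
    unfolding sup_set_eq[OF assms(3)] using t La precedes_first_third by (simp add: insert_commute)
  have "precedes (transposed_pairs b (id_perm n)) {z, y} {y, x} \<longleftrightarrow>
      precedes (transposed_pairs a (id_perm n)) {z, y} {y, x} \<and> (x, y, z) \<noteq> (p, q, r)"
    if "(x, y, z) \<in> triples ?w" for x y z
  proof (cases "(x, y, z) = (p, q, r)")
    case True
    have "precedes (transposed_pairs b (id_perm n)) {p, q} {q, r}"
      unfolding Lb by (rule precedes_first_third)
    then show ?thesis using True precedes_asym[OF dLb] by (auto simp: insert_commute)
  next
    case False
    have "x < y" "y < z" using that by (auto simp: triples_def)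
    then have "\<not> ({z, y} \<in> {{q, r}, {p, r}, {p, q}} \<and> {y, x} \<in> {{q, r}, {p, r}, {p, q}})"
      using False pqr by (auto simp: doubleton_eq_iff)
    then show ?thesis unfolding La Lb using False precedes_reverse_three by metis
  qed
  then have "sup_set ?w b = sup_set ?w a - {(p, q, r)}"
    unfolding sup_set_eq[OF assms(3)] sup_set_eq[OF rb, unfolded act_eq] by auto
  then show ?thesis using in_a by blast
qed

subsection \<open>Braid factors up to commutation\<close>

definition has_212 :: "nat list \<Rightarrow> bool" where
  "has_212 a \<longleftrightarrow> (\<exists>a' \<in> comm_class a. \<exists>xs i ys. a' = xs @ [i + 1, i, i + 1] @ ys)"

definition has_121 :: "nat list \<Rightarrow> bool" where
  "has_121 a \<longleftrightarrow> (\<exists>a' \<in> comm_class a. \<exists>xs i ys. a' = xs @ [i, i + 1, i] @ ys)"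

lemma has_212_comm_class: "b \<in> comm_class a \<Longrightarrow> has_212 b \<Longrightarrow> has_212 a"
  unfolding has_212_def by (meson comm_class_trans)

lemma has_121_comm_class: "b \<in> comm_class a \<Longrightarrow> has_121 b \<Longrightarrow> has_121 a"
  unfolding has_121_def by (meson comm_class_trans)

lemma has_212_append: "has_212 a \<Longrightarrow> has_212 (a @ c)"
proof -
  assume "has_212 a"
  then obtain xs i ys where "xs @ [i + 1, i, i + 1] @ ys \<in> comm_class a"
    unfolding has_212_def by blast
  then have "xs @ [i + 1, i, i + 1] @ (ys @ c) \<in> comm_class (a @ c)"
    using comm_class_append by fastforce
  then show ?thesis unfolding has_212_def by blast
qed

lemma has_121_append: "has_121 a \<Longrightarrow> has_121 (a @ c)"
proof -
  assume "has_121 a"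
  then obtain xs i ys where "xs @ [i, i + 1, i] @ ys \<in> comm_class a"
    unfolding has_121_def by blast
  then have "xs @ [i, i + 1, i] @ (ys @ c) \<in> comm_class (a @ c)"
    using comm_class_append by fastforce
  then show ?thesis unfolding has_121_def by blast
qed

subsection \<open>Moving the minimal descent to the end\<close>

text \<open>A weakening of \<open>d = Min (Des w)\<close> that survives the induction below.\<close>

definition left_max_descent :: "nat list \<Rightarrow> nat \<Rightarrow> bool" where
  "left_max_descent w d \<longleftrightarrow> 1 \<le> d \<and> d < length w \<and> w ! d < w ! (d - 1)
     \<and> (\<forall>i < d - 1. w ! i < w ! (d - 1))"

lemma left_max_descent_swap_far:
  assumes G: "left_max_descent w d" and e: "1 \<le> e" "e < length w"
    and far: "e + 2 \<le> d \<or> d + 2 \<le> e"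
  shows "left_max_descent (swap_adj e w) d"
proof -
  have d: "1 \<le> d" "d < length w" "w ! d < w ! (d - 1)"
    and left: "\<And>i. i < d - 1 \<Longrightarrow> w ! i < w ! (d - 1)"
    using G by (auto simp: left_max_descent_def)
  have same: "swap_adj e w ! (d - 1) = w ! (d - 1)" "swap_adj e w ! d = w ! d"
    using d e far by (auto simp: nth_swap_adj)
  have "swap_adj e w ! i < w ! (d - 1)" if "i < d - 1" for i
  proof -
    define j where "j = (if i = e - 1 then e else if i = e then e - 1 else i)"
    have "swap_adj e w ! i = w ! j" using nth_swap_adj[OF e, of i] that d by (simp add: j_def)
    moreover have "j < d - 1" using that far e by (auto simp: j_def)
    ultimately show ?thesis using left by simp
  qed
  then show ?thesis using d same by (simp add: left_max_descent_def)
qed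

lemma left_max_descent_swap_right:
  assumes G: "left_max_descent w d" and "d + 1 < length w" "w ! (d + 1) < w ! d"
  shows "left_max_descent (swap_adj (d + 1) w) d"
    and "left_max_descent (swap_adj d (swap_adj (d + 1) w)) (d + 1)"
proof -
  have d: "1 \<le> d" "w ! d < w ! (d - 1)" and left: "\<And>i. i < d - 1 \<Longrightarrow> w ! i < w ! (d - 1)"
    using G by (auto simp: left_max_descent_def)
  define v where "v = swap_adj (d + 1) w"
  have v: "v ! (d - 1) = w ! (d - 1)" "v ! d = w ! (d + 1)" "v ! (d + 1) = w ! d"
    "\<And>i. i < d - 1 \<Longrightarrow> v ! i = w ! i"
    using d assms(2) by (auto simp: v_def nth_swap_adj)
  have lv: "length v = length w" by (simp add: v_def)
  show "left_max_descent v d"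
    using d v left assms(2,3) lv by (auto simp: left_max_descent_def)
  have "swap_adj d v ! (d - 1) = w ! (d + 1)" "swap_adj d v ! d = w ! (d - 1)"
    "swap_adj d v ! (d + 1) = w ! d" "\<And>i. i < d - 1 \<Longrightarrow> swap_adj d v ! i = w ! i"
    using d assms(2) v lv by (auto simp: nth_swap_adj)
  moreover have "swap_adj d v ! i < w ! (d - 1)" if "i < d" for i
  proof (cases "i = d - 1")
    case True then show ?thesis using calculation(1) assms(3) d(2) by simp
  next
    case False then show ?thesis using calculation(4) left that by simp
  qed
  ultimately show "left_max_descent (swap_adj d v) (d + 1)"
    using d assms(2) lv unfolding left_max_descent_def by auto
qed

lemma left_max_descent_Min_Des:
  assumes "distinct w" "Des w \<noteq> {}"
  shows "left_max_descent w (Min (Des w))"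
proof -
  define d where "d = Min (Des w)"
  have fin: "finite (Des w)" by (rule finite_subset[of _ "{..<length w}"]) (auto simp: Des_def)
  then have "d \<in> Des w" using assms(2) by (simp add: d_def)
  then have d: "1 \<le> d" "d < length w" "w ! d < w ! (d - 1)" by (auto simp: Des_def)
  have asc: "w ! (j - 1) < w ! j" if "1 \<le> j" "j < d" for j
  proof -
    have "j \<notin> Des w" using that Min_le[OF fin, of j] by (auto simp: d_def)
    moreover have "w ! (j - 1) \<noteq> w ! j" using assms(1) that d by (simp add: nth_eq_iff_index_eq)
    ultimately show ?thesis using that d by (auto simp: Des_def)
  qed
  then have "w ! i < w ! Suc i" if "Suc i < d" for i
    using asc[of "Suc i"] that by simp
  then have "sorted_wrt (<) (take d w)"
    using d by (auto simp: sorted_wrt_iff_nth_Suc_transp)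
  then have "w ! i < w ! (d - 1)" if "i < d - 1" for i
    using sorted_wrt_nth_less[of "(<)" "take d w" i "d - 1"] that d by simp
  then show ?thesis using d unfolding left_max_descent_def d_def by blast
qed

lemma left_max_descent_last_letter:
  assumes "reduced n a" "left_max_descent (act a (id_perm n)) d"
  shows "can_end_with a d \<or> has_212 a"
  using assms
proof (induction "length a" arbitrary: a d rule: less_induct)
  case less
  show ?case
  proof (cases a rule: rev_exhaust)
    case Nil
    then show ?thesis using less.prems(2) by (auto simp: left_max_descent_def)
  next
    case (snoc c e)
    define w where "w = act a (id_perm n)"
    define v where "v = act c (id_perm n)"
    have rc: "reduced n c" and e: "1 \<le> e" "e < n"
      using less.prems(1) by (auto simp: snoc reduced_snoc)
    have "w = swap_adj e v" by (simp add: w_def v_def snoc)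
    then have v_w: "v = swap_adj e w" using swap_adj_swap_adj[of e v] e by (simp add: v_def)
    have desc: "w ! e < w ! (e - 1)" using last_letter_descent less.prems(1) by (simp add: snoc w_def)
    have G: "left_max_descent w d" using less.prems(2) by (simp add: w_def)
    have IH: "can_end_with c' d' \<or> has_212 c'"
      if "length c' < length a" "reduced n c'" "left_max_descent (act c' (id_perm n)) d'" for c' d'
      using less.hyps that by blast
    have lc: "length c < length a" by (simp add: snoc)
    consider "e = d" | "e + 2 \<le> d \<or> d + 2 \<le> e" | "e + 1 = d" | "e = d + 1" by linarith
    then show ?thesis
    proof cases
      case 1
      then show ?thesis unfolding can_end_with_def by (intro disjI1 exI[of _ c]) (simp add: snoc)
    next
      case 2
      have "left_max_descent v d" using left_max_descent_swap_far[OF G] e 2 v_w by (simp add: w_def)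
      then have "can_end_with c d \<or> has_212 c" using IH[OF lc rc] by (simp add: v_def)
      then show ?thesis using can_end_with_snoc_far[OF _ 2] has_212_append by (auto simp: snoc)
    next
      case 3
      then have "\<forall>i < e. w ! i < w ! e" using G by (auto simp: left_max_descent_def)
      then have "w ! (e - 1) < w ! e" using e by simp
      then show ?thesis using desc by simp
    next
      case 4
      have "w ! (d + 1) < w ! d" "d + 1 < length w" using desc e 4 by (simp_all add: w_def)
      then have G': "left_max_descent (swap_adj (d + 1) w) d"
        "left_max_descent (swap_adj d (swap_adj (d + 1) w)) (d + 1)"
        using left_max_descent_swap_right[OF G] by blast+
      have "left_max_descent v d" using G'(1) v_w 4 by simp
      then consider (ends) c1 where "c1 @ [d] \<in> comm_class c" | (braid) "has_212 c"
        using IH[OF lc rc] unfolding can_end_with_def v_def by blast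
      then show ?thesis
      proof cases
        case (ends c1)
        note c1 = comm_class_snoc[OF ends rc]
        have "act c1 (id_perm n) = swap_adj d v" using c1(2) by (simp add: v_def)
        then have "left_max_descent (act c1 (id_perm n)) (d + 1)" using G'(2) v_w 4 by simp
        moreover have "length c1 < length a" using c1(3) lc by simp
        ultimately consider (ends') c2 where "c2 @ [d + 1] \<in> comm_class c1" | (braid') "has_212 c1"
          using IH c1(1) unfolding can_end_with_def by blast
        then show ?thesis
        proof cases
          case (ends' c2)
          have "c2 @ [d + 1, d, d + 1] @ [] \<in> comm_class a"
            using comm_class_snoc_braid[OF ends ends'] snoc 4 by simp
          then show ?thesis unfolding has_212_def by blast
        qed (use has_212_comm_class[OF ends] has_212_append snoc in auto)
      qed (simp add: snoc has_212_append)
    qed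
  qed
qed

subsection \<open>Moving the maximal descent to the end\<close>

definition right_min_descent :: "nat list \<Rightarrow> nat \<Rightarrow> bool" where
  "right_min_descent w d \<longleftrightarrow> 1 \<le> d \<and> d < length w \<and> w ! d < w ! (d - 1)
     \<and> (\<forall>i. d < i \<and> i < length w \<longrightarrow> w ! d < w ! i)"

lemma right_min_descent_swap_far:
  assumes G: "right_min_descent w d" and e: "1 \<le> e" "e < length w"
    and far: "e + 2 \<le> d \<or> d + 2 \<le> e"
  shows "right_min_descent (swap_adj e w) d"
proof -
  have d: "1 \<le> d" "d < length w" "w ! d < w ! (d - 1)"
    and right: "\<And>i. d < i \<Longrightarrow> i < length w \<Longrightarrow> w ! d < w ! i"
    using G by (auto simp: right_min_descent_def)
  have same: "swap_adj e w ! (d - 1) = w ! (d - 1)" "swap_adj e w ! d = w ! d"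
    using d e far by (auto simp: nth_swap_adj)
  have "w ! d < swap_adj e w ! i" if "d < i" "i < length w" for i
  proof -
    define j where "j = (if i = e - 1 then e else if i = e then e - 1 else i)"
    have "swap_adj e w ! i = w ! j" using nth_swap_adj[OF e, of i] that by (simp add: j_def)
    moreover have "d < j" "j < length w" using that far e by (auto simp: j_def)
    ultimately show ?thesis using right by simp
  qed
  then show ?thesis using d same by (simp add: right_min_descent_def)
qed

lemma right_min_descent_swap_left:
  assumes G: "right_min_descent w d" and "2 \<le> d" "w ! (d - 1) < w ! (d - 2)"
  shows "right_min_descent (swap_adj (d - 1) w) d"
    and "right_min_descent (swap_adj d (swap_adj (d - 1) w)) (d - 1)"
proof -
  have d: "d < length w" "w ! d < w ! (d - 1)"
    and right: "\<And>i. d < i \<Longrightarrow> i < length w \<Longrightarrow> w ! d < w ! i"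
    using G by (auto simp: right_min_descent_def)
  define v where "v = swap_adj (d - 1) w"
  have lv: "length v = length w" by (simp add: v_def)
  have v: "v ! (d - 2) = w ! (d - 1)" "v ! (d - 1) = w ! (d - 2)" "v ! d = w ! d"
    "\<And>i. d < i \<Longrightarrow> i < length w \<Longrightarrow> v ! i = w ! i"
    using d assms(2) nth_swap_adj[of "d - 1" w] by (auto simp: v_def numeral_2_eq_2)
  show "right_min_descent v d"
    using d v right assms(2,3) lv by (auto simp: right_min_descent_def)
  have v': "swap_adj d v ! (d - 2) = w ! (d - 1)" "swap_adj d v ! (d - 1) = w ! d"
    "swap_adj d v ! d = w ! (d - 2)" "\<And>i. d < i \<Longrightarrow> i < length w \<Longrightarrow> swap_adj d v ! i = w ! i"
    using d assms(2) v lv nth_swap_adj[of d v] by (auto simp: numeral_2_eq_2)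
  have "w ! d < swap_adj d v ! i" if "d - 1 < i" "i < length w" for i
  proof (cases "i = d")
    case True then show ?thesis using v'(3) d(2) assms(3) by simp
  next
    case False then show ?thesis using v'(4) right that by simp
  qed
  moreover have "d - 1 - 1 = d - 2" "1 \<le> d - 1" "d - 1 < length w" using assms(2) d by auto
  ultimately show "right_min_descent (swap_adj d v) (d - 1)"
    using d assms(2,3) lv v' unfolding right_min_descent_def by auto
qed

lemma right_min_descent_Max_Des:
  assumes "distinct w" "Des w \<noteq> {}"
  shows "right_min_descent w (Max (Des w))"
proof -
  define d where "d = Max (Des w)"
  have fin: "finite (Des w)" by (rule finite_subset[of _ "{..<length w}"]) (auto simp: Des_def)
  then have "d \<in> Des w" using assms(2) by (simp add: d_def)
  then have d: "1 \<le> d" "d < length w" "w ! d < w ! (d - 1)" by (auto simp: Des_def)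
  have asc: "w ! (j - 1) < w ! j" if "d < j" "j < length w" for j
  proof -
    have "j \<notin> Des w" using that Max_ge[OF fin, of j] by (auto simp: d_def)
    moreover have "w ! (j - 1) \<noteq> w ! j" using assms(1) that by (simp add: nth_eq_iff_index_eq)
    ultimately show ?thesis using that d by (auto simp: Des_def)
  qed
  then have "drop d w ! i < drop d w ! Suc i" if "Suc i < length (drop d w)" for i
    using asc[of "d + Suc i"] that d by simp
  then have "sorted_wrt (<) (drop d w)" by (auto simp: sorted_wrt_iff_nth_Suc_transp)
  then have "w ! d < w ! i" if "d < i" "i < length w" for i
    using sorted_wrt_nth_less[of "(<)" "drop d w" 0 "i - d"] that d by simp
  then show ?thesis using d unfolding right_min_descent_def d_def by blast
qed

lemma right_min_descent_last_letter:
  assumes "reduced n a" "right_min_descent (act a (id_perm n)) d"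
  shows "can_end_with a d \<or> has_121 a"
  using assms
proof (induction "length a" arbitrary: a d rule: less_induct)
  case less
  show ?case
  proof (cases a rule: rev_exhaust)
    case Nil
    then show ?thesis using less.prems(2) by (auto simp: right_min_descent_def)
  next
    case (snoc c e)
    define w where "w = act a (id_perm n)"
    define v where "v = act c (id_perm n)"
    have rc: "reduced n c" and e: "1 \<le> e" "e < n"
      using less.prems(1) by (auto simp: snoc reduced_snoc)
    have "w = swap_adj e v" by (simp add: w_def v_def snoc)
    then have v_w: "v = swap_adj e w" using swap_adj_swap_adj[of e v] e by (simp add: v_def)
    have desc: "w ! e < w ! (e - 1)" using last_letter_descent less.prems(1) by (simp add: snoc w_def)
    have G: "right_min_descent w d" using less.prems(2) by (simp add: w_def)
    have IH: "can_end_with c' d' \<or> has_121 c'"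
      if "length c' < length a" "reduced n c'" "right_min_descent (act c' (id_perm n)) d'" for c' d'
      using less.hyps that by blast
    have lc: "length c < length a" by (simp add: snoc)
    consider "e = d" | "e + 2 \<le> d \<or> d + 2 \<le> e" | "e = d + 1" | "e + 1 = d" by linarith
    then show ?thesis
    proof cases
      case 1
      then show ?thesis unfolding can_end_with_def by (intro disjI1 exI[of _ c]) (simp add: snoc)
    next
      case 2
      have "right_min_descent v d" using right_min_descent_swap_far[OF G] e 2 v_w by (simp add: w_def)
      then have "can_end_with c d \<or> has_121 c" using IH[OF lc rc] by (simp add: v_def)
      then show ?thesis using can_end_with_snoc_far[OF _ 2] has_121_append by (auto simp: snoc)
    next
      case 3
      then have "w ! d < w ! e" using G e by (auto simp: right_min_descent_def w_def)
      then show ?thesis using desc 3 by simp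
    next
      case 4
      have d2: "2 \<le> d" and de: "d - 1 = e" "d - 2 = e - 1" using 4 e by auto
      then have "w ! (d - 1) < w ! (d - 2)" using desc by simp
      then have G': "right_min_descent (swap_adj (d - 1) w) d"
        "right_min_descent (swap_adj d (swap_adj (d - 1) w)) (d - 1)"
        using right_min_descent_swap_left[OF G d2] by blast+
      have "right_min_descent v d" using G'(1) v_w de by simp
      then consider (ends) c1 where "c1 @ [d] \<in> comm_class c" | (braid) "has_121 c"
        using IH[OF lc rc] unfolding can_end_with_def v_def by blast
      then show ?thesis
      proof cases
        case (ends c1)
        note c1 = comm_class_snoc[OF ends rc]
        have "act c1 (id_perm n) = swap_adj d v" using c1(2) by (simp add: v_def)
        then have "right_min_descent (act c1 (id_perm n)) e" using G'(2) v_w de by simp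
        moreover have "length c1 < length a" using c1(3) lc by simp
        ultimately consider (ends') c2 where "c2 @ [e] \<in> comm_class c1" | (braid') "has_121 c1"
          using IH c1(1) unfolding can_end_with_def by blast
        then show ?thesis
        proof cases
          case (ends' c2)
          have "c2 @ [e, e + 1, e] @ [] \<in> comm_class a"
            using comm_class_snoc_braid[OF ends ends'] snoc 4 by simp
          then show ?thesis unfolding has_121_def by blast
        qed (use has_121_comm_class[OF ends] has_121_append snoc in auto)
      qed (simp add: snoc has_121_append)
    qed
  qed
qed

lemma a_min_snoc:
  "inv_count w = Suc (inv_count (swap_adj (Min (Des w)) w)) \<Longrightarrow>
     a_min w = a_min (swap_adj (Min (Des w)) w) @ [Min (Des w)]"
  by (simp add: a_min_def Let_def)

lemma a_max_snoc:
  "inv_count w = Suc (inv_count (swap_adj (Max (Des w)) w)) \<Longrightarrow>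
     a_max w = a_max (swap_adj (Max (Des w)) w) @ [Max (Des w)]"
  by (simp add: a_max_def Let_def)

lemma Des_act_nonempty:
  assumes "reduced n a" "a \<noteq> []"
  shows "Des (act a (id_perm n)) \<noteq> {}"
proof -
  obtain c e where a: "a = c @ [e]" using assms(2) by (cases a rule: rev_exhaust) auto
  have "1 \<le> e" "e < n" using assms(1) by (simp_all add: a reduced_snoc)
  then have "e \<in> Des (act a (id_perm n))"
    using last_letter_descent assms(1) by (simp add: a Des_def)
  then show ?thesis by blast
qed

lemma has_212_if_not_in_a_min_class:
  assumes "reduced n a" "a \<notin> comm_class (a_min (act a (id_perm n)))"
  shows "has_212 a"
  using assms
proof (induction "length a" arbitrary: a rule: less_induct)
  case less
  define w where "w = act a (id_perm n)"
  define d where "d = Min (Des w)"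
  have "a \<noteq> []" using less.prems(2) by (auto simp: a_min_def)
  then have "Des w \<noteq> {}" using Des_act_nonempty less.prems(1) by (simp add: w_def)
  then have "left_max_descent (act a (id_perm n)) d"
    using left_max_descent_Min_Des distinct_act_id_perm[OF less.prems(1)] by (simp add: d_def w_def)
  then have "can_end_with a d \<or> has_212 a"
    using left_max_descent_last_letter less.prems(1) by blast
  then show ?case
  proof
    assume "can_end_with a d"
    then obtain c where c: "c @ [d] \<in> comm_class a" by (auto simp: can_end_with_def)
    note c_props = comm_class_snoc[OF c less.prems(1)]
    have "c \<in> comm_class (a_min (act c (id_perm n))) \<or> has_212 c"
      using less.hyps c_props by fastforce
    then show ?thesis
    proof
      assume "has_212 c"
      then show ?thesis using has_212_append has_212_comm_class[OF c] by blast
    next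
      assume "c \<in> comm_class (a_min (act c (id_perm n)))"
      then have "c @ [d] \<in> comm_class (a_min (swap_adj d w) @ [d])"
        using comm_class_append c_props(2) by (simp add: w_def)
      moreover have "a_min w = a_min (swap_adj d w) @ [d]"
        using a_min_snoc inv_count_comm_class_snoc[OF c less.prems(1)] by (simp add: d_def w_def)
      ultimately have "a \<in> comm_class (a_min w)"
        using comm_class_sym[OF c] comm_class_trans by metis
      then show ?thesis using less.prems(2) by (simp add: w_def)
    qed
  qed
qed

lemma has_121_if_not_in_a_max_class:
  assumes "reduced n a" "a \<notin> comm_class (a_max (act a (id_perm n)))"
  shows "has_121 a"
  using assms
proof (induction "length a" arbitrary: a rule: less_induct)
  case less
  define w where "w = act a (id_perm n)"
  define d where "d = Max (Des w)"
  have "a \<noteq> []" using less.prems(2) by (auto simp: a_max_def)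
  then have "Des w \<noteq> {}" using Des_act_nonempty less.prems(1) by (simp add: w_def)
  then have "right_min_descent (act a (id_perm n)) d"
    using right_min_descent_Max_Des distinct_act_id_perm[OF less.prems(1)] by (simp add: d_def w_def)
  then have "can_end_with a d \<or> has_121 a"
    using right_min_descent_last_letter less.prems(1) by blast
  then show ?case
  proof
    assume "can_end_with a d"
    then obtain c where c: "c @ [d] \<in> comm_class a" by (auto simp: can_end_with_def)
    note c_props = comm_class_snoc[OF c less.prems(1)]
    have "c \<in> comm_class (a_max (act c (id_perm n))) \<or> has_121 c"
      using less.hyps c_props by fastforce
    then show ?thesis
    proof
      assume "has_121 c"
      then show ?thesis using has_121_append has_121_comm_class[OF c] by blast
    next
      assume "c \<in> comm_class (a_max (act c (id_perm n)))"
      then have "c @ [d] \<in> comm_class (a_max (swap_adj d w) @ [d])"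
        using comm_class_append c_props(2) by (simp add: w_def)
      moreover have "a_max w = a_max (swap_adj d w) @ [d]"
        using a_max_snoc inv_count_comm_class_snoc[OF c less.prems(1)] by (simp add: d_def w_def)
      ultimately have "a \<in> comm_class (a_max w)"
        using comm_class_sym[OF c] comm_class_trans by metis
      then show ?thesis using less.prems(2) by (simp add: w_def)
    qed
  qed
qed

lemma adjacent_classes_braid_step:
  assumes "reduced n a" "a' \<in> comm_class a" "braid_step b a'"
    and "reduced n b" "act b (id_perm n) = act a (id_perm n)"
    and "sup_set (act a (id_perm n)) b \<noteq> sup_set (act a (id_perm n)) a"
  shows "adjacent_classes b a"
proof -
  have "comm_class b \<noteq> comm_class a"
  proof
    assume "comm_class b = comm_class a"
    then have "a \<in> comm_class b" by (metis comm_class_refl)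
    then show False using comm_class_invariants[of a b n] assms(4-6) by simp
  qed
  then show ?thesis unfolding adjacent_classes_def using assms(2,3) comm_class_refl by blast
qed

lemma exists_adjacent_sup_psubset:
  assumes "reduced n a" "has_212 a"
  shows "\<exists>b. reduced n b \<and> act b (id_perm n) = act a (id_perm n) \<and> adjacent_classes b a
    \<and> sup_set (act a (id_perm n)) b \<subset> sup_set (act a (id_perm n)) a"
proof -
  obtain xs i ys where a': "xs @ [i + 1, i, i + 1] @ ys \<in> comm_class a"
    using assms(2) unfolding has_212_def by blast
  define b where "b = xs @ [i, i + 1, i] @ ys"
  note inv = comm_class_invariants[OF a' assms(1)]
  then have rb: "reduced n b" and act_b: "act b (id_perm n) = act a (id_perm n)"
    using reduced_braid_iff act_braid[of "id_perm n"] by (auto simp: b_def reduced_def)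
  have "sup_set (act a (id_perm n)) b \<subset> sup_set (act a (id_perm n)) a"
    using sup_set_braid[where xs = xs and ys = ys and i = i and n = n] inv by (auto simp: b_def)
  moreover have "braid_step b (xs @ [i + 1, i, i + 1] @ ys)"
    unfolding braid_step_def b_def by blast
  ultimately show ?thesis
    using adjacent_classes_braid_step[OF assms(1) a' _ rb act_b] rb act_b by blast
qed

lemma exists_adjacent_sup_psupset:
  assumes "reduced n a" "has_121 a"
  shows "\<exists>b. reduced n b \<and> act b (id_perm n) = act a (id_perm n) \<and> adjacent_classes b a
    \<and> sup_set (act a (id_perm n)) a \<subset> sup_set (act a (id_perm n)) b"
proof -
  obtain xs i ys where a': "xs @ [i, i + 1, i] @ ys \<in> comm_class a"
    using assms(2) unfolding has_121_def by blast
  define b where "b = xs @ [i + 1, i, i + 1] @ ys"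
  note inv = comm_class_invariants[OF a' assms(1)]
  then have rb: "reduced n b" and act_b: "act b (id_perm n) = act a (id_perm n)"
    using reduced_braid_iff act_braid[of "id_perm n"] by (auto simp: b_def reduced_def)
  have "sup_set (act a (id_perm n)) a \<subset> sup_set (act a (id_perm n)) b"
    using sup_set_braid[where xs = xs and ys = ys and i = i and n = n] inv rb act_b by (auto simp: b_def)
  moreover have "braid_step b (xs @ [i, i + 1, i] @ ys)"
    unfolding braid_step_def b_def by blast
  ultimately show ?thesis
    using adjacent_classes_braid_step[OF assms(1) a' _ rb act_b] rb act_b by blast
qed

theorem mainTheorem6:
  fixes n :: nat and w a :: "nat list"
  assumes "is_perm n w"
    and "a \<in> reduced_words w"
  shows "(a \<notin> comm_class (a_min w) \<longrightarrow>
           (\<exists>b \<in> reduced_words w. adjacent_classes b a \<and> sup_set w b \<subset> sup_set w a))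
       \<and> (a \<notin> comm_class (a_max w) \<longrightarrow>
           (\<exists>b \<in> reduced_words w. adjacent_classes b a \<and> sup_set w a \<subset> sup_set w b))"
proof -
  have lw: "length w = n" using assms(1) by (simp add: is_perm_def)
  have a: "reduced n a" "act a (id_perm n) = w" using assms(2) reduced_words_iff[OF lw] by auto
  have b: "b \<in> reduced_words w" if "reduced n b" "act b (id_perm n) = act a (id_perm n)" for b
    using reduced_words_iff[OF lw] a that by simp
  show ?thesis
  proof (intro conjI impI)
    assume "a \<notin> comm_class (a_min w)"
    then have "has_212 a" using has_212_if_not_in_a_min_class a by simp
    then show "\<exists>b \<in> reduced_words w. adjacent_classes b a \<and> sup_set w b \<subset> sup_set w a"
      using exists_adjacent_sup_psubset[OF a(1)] a(2) b by metis
  next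
    assume "a \<notin> comm_class (a_max w)"
    then have "has_121 a" using has_121_if_not_in_a_max_class a by simp
    then show "\<exists>b \<in> reduced_words w. adjacent_classes b a \<and> sup_set w a \<subset> sup_set w b"
      using exists_adjacent_sup_psupset[OF a(1)] a(2) b by metis
  qed
qed

end
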